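(* Let $d\ge 2$, let $q:\mathbb{R}\to\mathbb{R}$ be a Schwartz function supported in $[\tfrac12,2]$, let $b\in[0,1)$, and let $f\in L^1(\mathbb{R}^d)$ with $F = f*\tilde f$. For $N>0$ define $H_1:\mathbb{R}\to\mathbb{C}$ by $$H_1(t) = \frac{1}{\sqrt{t+b}}\, h_1(\sqrt{t+b})\, q\!\left(\frac{\sqrt{t+b}}{N}\right)$$ for $t > -b$, and $H_1(t)=0$ otherwise. Then for all sufficiently large $N$, $$\sum_{\nu\in\mathbb{Z},\,\nu\neq 0} |\hat H_1(\nu)| \le \frac{C\,\|F\|_1}{N},$$ where $C$ depends only on $q$ and $d$.
   Context: The Fourier transform is $\hat u(\xi)=\int u(x)e^{-2\pi i x\cdot\xi}dx$, in any dimension. We write $\tilde f(x)=\overline{f(-x)}$. For $t>0$, $\sigma_t$ denotes surface measure on the sphere $\{\xi\in\mathbb{R}^d:|\xi|=t\}$, and $$\widehat{d\sigma_t}(x)=\int_{|\xi|=t} e^{-2\pi i x\cdot\xi}\,d\sigma_t(\xi).$$ For $t>0$ we set $$h_1(t)=\int_{|x|\le 1} F(x)\,\widehat{d\sigma_t}(x)\,dx.$$ *)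

theory Defs
  imports "HOL-Analysis.Analysis"
begin

definition schwartz :: "(real \<Rightarrow> real) \<Rightarrow> bool" where
  "schwartz q \<longleftrightarrow>
     (\<forall>k t. ((deriv ^^ k) q) differentiable (at t)) \<and>
     (\<forall>k m. bounded (range (\<lambda>t. t ^ m * (deriv ^^ k) q t)))"

definition tilde :: "('a::euclidean_space \<Rightarrow> complex) \<Rightarrow> 'a \<Rightarrow> complex" where
  "tilde f x = cnj (f (- x))"

definition conv :: "('a::euclidean_space \<Rightarrow> complex) \<Rightarrow> ('a \<Rightarrow> complex) \<Rightarrow> 'a \<Rightarrow> complex" where
  "conv f g x = (\<integral>y. f y * g (x - y) \<partial>lborel)"

definition L1norm :: "('a::euclidean_space \<Rightarrow> complex) \<Rightarrow> real" where
  "L1norm F = (\<integral>x. norm (F x) \<partial>lborel)"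

text \<open>Surface measure on the sphere of radius t in R^d, via the cone construction:
  sigma_t(E) = d * t^(d-1) * Lebesgue{eta : 0 < |eta| \<le> 1, t * eta/|eta| \<in> E}.\<close>
definition sphere_measure :: "real \<Rightarrow> 'a::euclidean_space measure" where
  "sphere_measure t =
     density (distr (density lborel (indicator (cball (0::'a) 1 - {0}))) borel
                    (\<lambda>\<eta>. t *\<^sub>R sgn \<eta>))
             (\<lambda>_. ennreal (real DIM('a) * t ^ (DIM('a) - 1)))"

definition sphere_ft :: "real \<Rightarrow> 'a::euclidean_space \<Rightarrow> complex" where
  "sphere_ft t x = (\<integral>\<xi>. cis (- 2 * pi * (x \<bullet> \<xi>)) \<partial>(sphere_measure t))"

definition h1 :: "('a::euclidean_space \<Rightarrow> complex) \<Rightarrow> real \<Rightarrow> complex" where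
  "h1 F t = (\<integral>x. indicator (cball (0::'a) 1) x *\<^sub>R (F x * sphere_ft t x) \<partial>lborel)"

definition H1 :: "(real \<Rightarrow> real) \<Rightarrow> real \<Rightarrow> ('a::euclidean_space \<Rightarrow> complex) \<Rightarrow> real \<Rightarrow> real \<Rightarrow> complex" where
  "H1 q b F N t = (if t > - b then
      complex_of_real (1 / sqrt (t + b)) * h1 F (sqrt (t + b)) * complex_of_real (q (sqrt (t + b) / N))
    else 0)"

definition ft1 :: "(real \<Rightarrow> complex) \<Rightarrow> real \<Rightarrow> complex" where
  "ft1 H \<nu> = (\<integral>t. H t * cis (- 2 * pi * t * \<nu>) \<partial>lborel)"

end

theory Submission
  imports Defs
begin

text \<open>Writing \<open>sigma_s\<close> in polar form over the unit ball and integrating in \<open>t\<close> first, the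
  Fourier coefficient of \<open>H_1\<close> at \<open>nu\<close> becomes an average, over \<open>x\<close> in the unit ball and
  directions \<open>omega\<close>, of \<open>F(x)\<close> times a one-dimensional oscillatory integral in \<open>t\<close>. With
  \<open>phi = x \<bullet> omega\<close>, the substitution \<open>t = N\<^sup>2 (w - c)\<^sup>2 - b\<close>, \<open>c = phi / (2 N nu)\<close>, turns its
  phase into a constant minus \<open>2 pi N\<^sup>2 nu w\<^sup>2\<close>, with amplitude \<open>(w - c)\<^sup>d\<^sup>-\<^sup>1 q(w - c)\<close>
  supported where \<open>w - c \<in> [1/2, 2]\<close>. Integrating by parts \<open>d\<close> times against
  \<open>cis (-2 pi N\<^sup>2 nu w\<^sup>2)\<close> bounds it by a constant times \<open>N\<^sup>d (N\<^sup>2 |nu|)\<^sup>-\<^sup>d \<le> 1 / (N nu\<^sup>2)\<close>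
  for \<open>d \<ge> 2\<close>, uniformly in \<open>b\<close>, \<open>c\<close> and \<open>F\<close>; the sum over \<open>nu \<noteq> 0\<close> of \<open>1 / nu\<^sup>2\<close>
  is finite.\<close>

lemma schwartz_has_real_derivative:
  "schwartz q \<Longrightarrow> ((deriv ^^ i) q has_real_derivative (deriv ^^ Suc i) q t) (at t)"
  unfolding schwartz_def by (simp add: DERIV_deriv_iff_real_differentiable)

lemma schwartz_isCont: "schwartz q \<Longrightarrow> isCont ((deriv ^^ i) q) t"
  using schwartz_has_real_derivative DERIV_isCont by blast

lemma schwartz_continuous_on: "schwartz q \<Longrightarrow> continuous_on S q"
  using schwartz_isCont[where i = 0] by (simp add: continuous_at_imp_continuous_on)

definition deriv_sup :: "(real \<Rightarrow> real) \<Rightarrow> nat \<Rightarrow> real" where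
  "deriv_sup q i = (SUP t. \<bar>(deriv ^^ i) q t\<bar>)"

lemma abs_deriv_le_deriv_sup:
  assumes "schwartz q"
  shows "\<bar>(deriv ^^ i) q t\<bar> \<le> deriv_sup q i"
proof -
  have "bounded (range (\<lambda>t. t ^ 0 * (deriv ^^ i) q t))"
    using assms unfolding schwartz_def by blast
  then show ?thesis
    unfolding deriv_sup_def using bounded_norm_le_SUP_norm by fastforce
qed

lemma deriv_sup_nonneg: "schwartz q \<Longrightarrow> 0 \<le> deriv_sup q i"
  using abs_deriv_le_deriv_sup abs_ge_zero order_trans by blast

lemma deriv_funpow_eq_0_on_open:
  assumes "open U" and "\<And>t. t \<in> U \<Longrightarrow> f t = 0" and "t \<in> U"
  shows "(deriv ^^ i) f t = 0"
  using assms(3)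
proof (induction i arbitrary: t)
  case 0
  then show ?case using assms(2) by simp
next
  case (Suc i)
  have "eventually (\<lambda>s. s \<in> U) (nhds t)"
    using Suc.prems assms(1) by (intro eventually_nhds_in_open)
  then have "eventually (\<lambda>s. (deriv ^^ i) f s = 0) (nhds t)"
    by eventually_elim (use Suc.IH in auto)
  then have "deriv ((deriv ^^ i) f) t = deriv (\<lambda>_. 0) t"
    by (rule deriv_cong_ev) simp
  then show ?case by simp
qed

lemma deriv_funpow_eq_0_outside:
  fixes q :: "real \<Rightarrow> real"
  assumes "closed S" and "\<forall>t. t \<notin> S \<longrightarrow> q t = 0" and "t \<notin> S"
  shows "(deriv ^^ i) q t = 0"
  using assms by (intro deriv_funpow_eq_0_on_open[of "- S"]) auto

type_synonym amp_term = "real \<times> nat \<times> nat \<times> nat"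

text \<open>The term \<open>(a, i, j, m)\<close> stands for \<open>w \<mapsto> a w\<^sup>-\<^sup>j (w - c)\<^sup>m q\<^sup>(\<^sup>i\<^sup>)(w - c)\<close> and a list
  of terms for their sum. This family is closed under \<open>a \<mapsto> (a / w)'\<close>, the operation produced by
  one integration by parts against \<open>cis (-2 pi lam w\<^sup>2)\<close>, and its bounds do not depend on \<open>c\<close>.\<close>

definition amp_term_eval :: "(real \<Rightarrow> real) \<Rightarrow> real \<Rightarrow> amp_term \<Rightarrow> real \<Rightarrow> real" where
  "amp_term_eval q c t w =
     (case t of (a, i, j, m) \<Rightarrow> a * inverse w ^ j * (w - c) ^ m * (deriv ^^ i) q (w - c))"

definition amp_eval :: "(real \<Rightarrow> real) \<Rightarrow> real \<Rightarrow> amp_term list \<Rightarrow> real \<Rightarrow> real" where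
  "amp_eval q c L w = (\<Sum>t\<leftarrow>L. amp_term_eval q c t w)"

text \<open>For \<open>m = 0\<close> the middle term has coefficient \<open>0\<close>, so the truncated \<open>m - 1\<close> is harmless.\<close>

definition amp_term_ibp :: "amp_term \<Rightarrow> amp_term list" where
  "amp_term_ibp t = (case t of (a, i, j, m) \<Rightarrow>
     [(- real (j + 1) * a, i, j + 2, m), (real m * a, i, j + 1, m - 1), (a, Suc i, j + 1, m)])"

definition amp_ibp :: "amp_term list \<Rightarrow> amp_term list" where
  "amp_ibp L = concat (map amp_term_ibp L)"

definition amp_bound :: "(real \<Rightarrow> real) \<Rightarrow> amp_term list \<Rightarrow> real" where
  "amp_bound q L = (\<Sum>(a, i, j, m)\<leftarrow>L. \<bar>a\<bar> * 8 ^ j * 2 ^ m * deriv_sup q i)"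

lemma amp_eval_Nil [simp]: "amp_eval q c [] w = 0"
  and amp_eval_Cons [simp]: "amp_eval q c (t # L) w = amp_term_eval q c t w + amp_eval q c L w"
  and amp_eval_append [simp]: "amp_eval q c (L @ L') w = amp_eval q c L w + amp_eval q c L' w"
  by (simp_all add: amp_eval_def)

lemma amp_ibp_Nil [simp]: "amp_ibp [] = []"
  and amp_ibp_Cons [simp]: "amp_ibp (t # L) = amp_term_ibp t @ amp_ibp L"
  by (simp_all add: amp_ibp_def)

lemma has_real_derivative_amp_term_ibp:
  assumes "schwartz q" and "w \<noteq> 0"
  shows "((\<lambda>w. amp_term_eval q c t w / w) has_real_derivative amp_eval q c (amp_term_ibp t) w) (at w)"
proof -
  obtain a i j m where t: "t = (a, i, j, m)" by (cases t) auto
  have eq: "(\<lambda>w. amp_term_eval q c t w / w) =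
      (\<lambda>w. a * inverse w ^ Suc j * (w - c) ^ m * (deriv ^^ i) q (w - c))"
    by (auto simp: amp_term_eval_def t field_simps)
  have inv: "((\<lambda>w. inverse w ^ Suc j) has_real_derivative - real (Suc j) * inverse w ^ (j + 2)) (at w)"
  proof -
    have "((\<lambda>w. inverse (w ^ Suc j)) has_real_derivative
        - (real (Suc j) * w ^ j * inverse ((w ^ Suc j) ^ Suc (Suc 0)))) (at w)"
      using assms(2) DERIV_inverse_fun[OF DERIV_pow[of "Suc j" w UNIV]] by simp
    moreover have "- (real (Suc j) * w ^ j * inverse ((w ^ Suc j) ^ Suc (Suc 0)))
        = - real (Suc j) * inverse w ^ (j + 2)"
      using assms(2) by (simp add: field_simps power_Suc)
    ultimately show ?thesis by (simp add: power_inverse)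
  qed
  have pow: "((\<lambda>w. (w - c) ^ m) has_real_derivative real m * (w - c) ^ (m - 1)) (at w)"
    by (auto intro!: derivative_eq_intros)
  have "((\<lambda>w. w - c) has_real_derivative 1) (at w)"
    by (auto intro!: derivative_eq_intros)
  from DERIV_chain2[OF schwartz_has_real_derivative[OF assms(1)] this]
  have dq: "((\<lambda>w. (deriv ^^ i) q (w - c)) has_real_derivative (deriv ^^ Suc i) q (w - c)) (at w)"
    by simp
  have "((\<lambda>w. a * inverse w ^ Suc j * (w - c) ^ m * (deriv ^^ i) q (w - c)) has_real_derivative
      a * (- real (Suc j) * inverse w ^ (j + 2)) * (w - c) ^ m * (deriv ^^ i) q (w - c)
      + a * inverse w ^ Suc j * (real m * (w - c) ^ (m - 1)) * (deriv ^^ i) q (w - c)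
      + a * inverse w ^ Suc j * (w - c) ^ m * (deriv ^^ Suc i) q (w - c)) (at w)"
    by (rule derivative_eq_intros inv pow dq refl | simp add: algebra_simps)+
  then show ?thesis
    unfolding eq by (simp add: amp_term_ibp_def amp_term_eval_def t algebra_simps)
qed

lemma has_real_derivative_amp_ibp:
  assumes "schwartz q" and "w \<noteq> 0"
  shows "((\<lambda>w. amp_eval q c L w / w) has_real_derivative amp_eval q c (amp_ibp L) w) (at w)"
proof (induction L)
  case (Cons t L)
  then show ?case
    using DERIV_add[OF has_real_derivative_amp_term_ibp[OF assms] Cons]
    by (simp add: add_divide_distrib)
qed simp

lemma continuous_on_amp_eval:
  assumes "schwartz q" and "0 \<notin> S"
  shows "continuous_on S (amp_eval q c L)"
proof -
  have term_cont: "isCont (\<lambda>w. amp_term_eval q c t w) w" if "w \<noteq> 0" for t w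
  proof -
    obtain a i j m where t: "t = (a, i, j, m)" by (cases t) auto
    have "isCont (\<lambda>w. (deriv ^^ i) q (w - c)) w"
      by (rule isCont_o2[OF _ schwartz_isCont[OF assms(1)]]) (auto intro!: continuous_intros)
    then show ?thesis
      using that unfolding t amp_term_eval_def by (auto intro!: continuous_intros)
  qed
  have "isCont (\<lambda>w. amp_eval q c L w) w" if "w \<noteq> 0" for w
    by (induction L) (auto intro!: continuous_intros term_cont that)
  then show ?thesis
    using assms(2) by (metis continuous_at_imp_continuous_on)
qed

lemma amp_eval_eq_0:
  assumes "\<forall>t. t \<notin> {1/2..2} \<longrightarrow> q t = 0" and "w - c \<notin> {1/2..2}"
  shows "amp_eval q c L w = 0"
proof (induction L)
  case (Cons t L)
  then show ?case
    using deriv_funpow_eq_0_outside[OF closed_atLeastAtMost assms] by (cases t) (simp add: amp_term_eval_def)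
qed simp

lemma abs_amp_eval_le:
  assumes q: "schwartz q" and supp: "\<forall>t. t \<notin> {1/2..2} \<longrightarrow> q t = 0" and w: "w \<ge> 1/8"
  shows "\<bar>amp_eval q c L w\<bar> \<le> amp_bound q L"
proof -
  have term_bound: "\<bar>amp_term_eval q c (a, i, j, m) w\<bar> \<le> \<bar>a\<bar> * 8 ^ j * 2 ^ m * deriv_sup q i" for a i j m
  proof (cases "w - c \<in> {1/2..2}")
    case False
    then show ?thesis
      using deriv_funpow_eq_0_outside[OF closed_atLeastAtMost supp] deriv_sup_nonneg[OF q]
      by (simp add: amp_term_eval_def)
  next
    case True
    have "\<bar>inverse w\<bar> \<le> 8"
      using w by (simp add: abs_if field_simps)
    then have "\<bar>inverse w ^ j\<bar> \<le> 8 ^ j"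
      by (metis power_abs power_mono abs_ge_zero)
    moreover have "\<bar>(w - c) ^ m\<bar> \<le> 2 ^ m"
      using True by (simp add: power_abs[symmetric] power_mono)
    ultimately have "\<bar>inverse w ^ j\<bar> * \<bar>(w - c) ^ m\<bar> * \<bar>(deriv ^^ i) q (w - c)\<bar>
        \<le> 8 ^ j * 2 ^ m * deriv_sup q i"
      by (intro mult_mono abs_deriv_le_deriv_sup[OF q]) auto
    then show ?thesis
      by (simp add: amp_term_eval_def abs_mult mult.assoc mult_left_mono)
  qed
  show ?thesis
  proof (induction L)
    case (Cons t L)
    have "\<bar>amp_eval q c (t # L) w\<bar> \<le> \<bar>amp_term_eval q c t w\<bar> + \<bar>amp_eval q c L w\<bar>"
      by simp
    also have "\<dots> \<le> amp_bound q (t # L)"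
    proof -
      obtain a i j m where t: "t = (a, i, j, m)" by (cases t) auto
      show ?thesis
        using add_mono[OF term_bound Cons] by (simp add: amp_bound_def t)
    qed
    finally show ?case .
  qed (simp add: amp_bound_def)
qed

lemma amp_bound_nonneg:
  assumes "schwartz q" and "\<forall>t. t \<notin> {1/2..2} \<longrightarrow> q t = 0"
  shows "0 \<le> amp_bound q L"
proof -
  have "\<bar>amp_eval q 0 L 1\<bar> \<le> amp_bound q L"
    by (rule abs_amp_eval_le[OF assms]) simp
  then show ?thesis by linarith
qed

lemma has_vector_derivative_cis:
  assumes "(\<theta> has_real_derivative D) (at w)"
  shows "((\<lambda>w. cis (\<theta> w)) has_vector_derivative D *\<^sub>R (\<i> * cis (\<theta> w))) (at w)"
proof -
  have "(\<theta> has_derivative (\<lambda>t. t * D)) (at w)"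
    using assms by (simp add: has_field_derivative_def mult.commute[of _ D])
  from has_derivative_cis[OF this] show ?thesis
    by (simp add: has_vector_derivative_def scaleR_scaleR mult.commute)
qed

text \<open>The derivative of \<open>cis (-2 pi lam w\<^sup>2)\<close> is \<open>-4 pi \<i> lam w cis (-2 pi lam w\<^sup>2)\<close>; dividing the
  amplitude by \<open>w\<close> absorbs the factor \<open>w\<close>.\<close>

lemma integral_chirp_by_parts:
  fixes a a' :: "real \<Rightarrow> real"
  assumes "\<alpha> \<le> \<beta>" and "0 \<notin> {\<alpha>..\<beta>}" and a_cont: "continuous_on {\<alpha>..\<beta>} a"
    and a': "\<And>w. w \<in> {\<alpha>..\<beta>} \<Longrightarrow> ((\<lambda>w. a w / w) has_real_derivative a' w) (at w)"
    and "a \<alpha> = 0" and "a \<beta> = 0"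
  shows "integral {\<alpha>..\<beta>} (\<lambda>w. a' w *\<^sub>R cis (-2*pi*lam*w\<^sup>2))
    = (4*pi*\<i>*lam) * integral {\<alpha>..\<beta>} (\<lambda>w. a w *\<^sub>R cis (-2*pi*lam*w\<^sup>2))"
proof -
  let ?f = "\<lambda>w. a w / w"
  let ?g = "\<lambda>w. cis (-2*pi*lam*w\<^sup>2)"
  let ?g' = "\<lambda>w. (-4*pi*lam*w) *\<^sub>R (\<i> * cis (-2*pi*lam*w\<^sup>2))"
  have f_cont: "continuous_on {\<alpha>..\<beta>} ?f"
    using assms(2) by (intro continuous_intros a_cont) auto
  have g_cont: "continuous_on {\<alpha>..\<beta>} ?g"
    by (intro continuous_intros)
  have f': "(?f has_vector_derivative a' w) (at w)" if "w \<in> {\<alpha>..\<beta>}" for w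
    using a'[OF that] by (simp add: has_real_derivative_iff_has_vector_derivative)
  have g': "(?g has_vector_derivative ?g' w) (at w)" for w
    by (rule has_vector_derivative_cis) (auto intro!: derivative_eq_intros)
  define J where "J = integral {\<alpha>..\<beta>} (\<lambda>w. ?f w *\<^sub>R ?g' w)"
  have "((\<lambda>w. ?f w *\<^sub>R ?g' w) has_integral J) {\<alpha>..\<beta>}"
    unfolding J_def by (intro integrable_integral integrable_continuous_interval continuous_intros f_cont)
  then have "((\<lambda>w. ?f w *\<^sub>R ?g' w) has_integral (?f \<beta> *\<^sub>R ?g \<beta> - ?f \<alpha> *\<^sub>R ?g \<alpha> - (- J))) {\<alpha>..\<beta>}"
    using assms(5,6) by simp
  from integration_by_parts[OF bounded_bilinear_scaleR assms(1) f_cont g_cont f' g' this]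
  have "integral {\<alpha>..\<beta>} (\<lambda>w. a' w *\<^sub>R ?g w) = - J"
    by (rule integral_unique)
  also have "J = integral {\<alpha>..\<beta>} (\<lambda>w. (-4*pi*\<i>*lam) * (a w *\<^sub>R ?g w))"
    unfolding J_def using assms(2)
    by (intro integral_cong) (auto simp: scaleR_conv_of_real field_simps)
  also have "\<dots> = (-4*pi*\<i>*lam) * integral {\<alpha>..\<beta>} (\<lambda>w. a w *\<^sub>R ?g w)"
    by (rule integral_mult_right)
  finally show ?thesis by simp
qed

text \<open>For \<open>|c| \<le> 1/4\<close> the interval \<open>[1/8, 4]\<close> contains the support \<open>[c + 1/2, c + 2]\<close> of every
  amplitude and stays away from \<open>0\<close>.\<close>

definition chirp_integral :: "(real \<Rightarrow> real) \<Rightarrow> real \<Rightarrow> amp_term list \<Rightarrow> real \<Rightarrow> complex" where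
  "chirp_integral q c L lam = integral {1/8..4} (\<lambda>w. amp_eval q c L w *\<^sub>R cis (-2*pi*lam*w\<^sup>2))"

lemma chirp_integral_amp_ibp_funpow:
  assumes q: "schwartz q" and supp: "\<forall>t. t \<notin> {1/2..2} \<longrightarrow> q t = 0" and c: "\<bar>c\<bar> \<le> 1/4"
  shows "chirp_integral q c ((amp_ibp ^^ k) L) lam = (4*pi*\<i>*lam) ^ k * chirp_integral q c L lam"
proof (induction k)
  case (Suc k)
  have "4 - c \<notin> {1/2..2}" and "1/8 - c \<notin> {1/2..2}"
    using c by (auto simp: abs_le_iff)
  then have "chirp_integral q c (amp_ibp ((amp_ibp ^^ k) L)) lam
      = (4*pi*\<i>*lam) * chirp_integral q c ((amp_ibp ^^ k) L) lam"
    unfolding chirp_integral_def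
    by (intro integral_chirp_by_parts continuous_on_amp_eval[OF q] has_real_derivative_amp_ibp[OF q]
        amp_eval_eq_0[OF supp]) auto
  then show ?case
    using Suc by simp
qed simp

lemma norm_chirp_integral_le:
  assumes q: "schwartz q" and supp: "\<forall>t. t \<notin> {1/2..2} \<longrightarrow> q t = 0"
  shows "norm (chirp_integral q c L lam) \<le> 4 * amp_bound q L"
proof -
  have "norm (chirp_integral q c L lam) \<le> integral {1/8..4::real} (\<lambda>_. amp_bound q L)"
    unfolding chirp_integral_def
  proof (rule integral_norm_bound_integral)
    show "(\<lambda>w. amp_eval q c L w *\<^sub>R cis (-2*pi*lam*w\<^sup>2)) integrable_on {1/8..4}"
      by (intro integrable_continuous_interval continuous_intros continuous_on_amp_eval[OF q]) auto
  qed (auto intro!: abs_amp_eval_le[OF q supp])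
  also have "\<dots> \<le> 4 * amp_bound q L"
    using amp_bound_nonneg[OF q supp] by simp
  finally show ?thesis .
qed

lemma norm_chirp_integral_decay:
  assumes q: "schwartz q" and supp: "\<forall>t. t \<notin> {1/2..2} \<longrightarrow> q t = 0" and c: "\<bar>c\<bar> \<le> 1/4"
    and lam: "lam \<noteq> 0"
  shows "norm (chirp_integral q c L lam) \<le> 4 * amp_bound q ((amp_ibp ^^ k) L) / \<bar>lam\<bar> ^ k"
proof -
  have "\<bar>lam\<bar> ^ k * norm (chirp_integral q c L lam) \<le> (4*pi*\<bar>lam\<bar>) ^ k * norm (chirp_integral q c L lam)"
    using pi_gt3 mult_right_mono[of 1 "4*pi" "\<bar>lam\<bar>"] by (intro mult_right_mono power_mono) auto
  also have "\<dots> = norm (chirp_integral q c ((amp_ibp ^^ k) L) lam)"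
    by (simp add: chirp_integral_amp_ibp_funpow[OF q supp c] norm_mult norm_power)
  also have "\<dots> \<le> 4 * amp_bound q ((amp_ibp ^^ k) L)"
    by (rule norm_chirp_integral_le[OF q supp])
  finally show ?thesis
    using lam by (simp add: field_simps)
qed

lemma chirp_integral_eq_integral_support:
  assumes q: "schwartz q" and supp: "\<forall>t. t \<notin> {1/2..2} \<longrightarrow> q t = 0" and c: "\<bar>c\<bar> \<le> 1/4"
  shows "chirp_integral q c L lam = integral {c + 1/2..c + 2} (\<lambda>w. amp_eval q c L w *\<^sub>R cis (-2*pi*lam*w\<^sup>2))"
proof -
  let ?h = "\<lambda>w. amp_eval q c L w *\<^sub>R cis (-2*pi*lam*w\<^sup>2)"
  have "?h integrable_on {c + 1/2..c + 2}"
    using c by (intro integrable_continuous_interval continuous_intros continuous_on_amp_eval[OF q])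
      (auto simp: abs_le_iff)
  then have "(?h has_integral integral {c + 1/2..c + 2} ?h) {1/8..4}"
  proof (rule has_integral_on_superset[OF integrable_integral])
    show "?h w = 0" if "w \<notin> {c + 1/2..c + 2}" for w
      using that amp_eval_eq_0[OF supp] by auto
    show "{c + 1/2..c + 2} \<subseteq> {1/8..4}"
      using c by (auto simp: abs_le_iff)
  qed
  then show ?thesis
    unfolding chirp_integral_def by (rule integral_unique)
qed

lemma borel_measurable_cis [measurable]:
  "f \<in> borel_measurable M \<Longrightarrow> (\<lambda>x. cis (f x)) \<in> borel_measurable M"
  by (erule borel_measurable_continuous_on[of cis, rotated]) (intro continuous_intros)

text \<open>With \<open>s = sqrt (t + b)\<close>, this is the \<open>t\<close>-integrand of \<open>ft1 (H1 q b F N) nu\<close> contributed by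
  a point \<open>x\<close> and a point \<open>s \<omega>\<close> of the sphere of radius \<open>s\<close>, where \<open>phi = x \<bullet> \<omega>\<close>; the factor
  \<open>d s\<^sup>d\<^sup>-\<^sup>1\<close> is the density of \<open>sphere_measure s\<close> with respect to the punctured unit ball.\<close>

definition radial_kernel ::
    "(real \<Rightarrow> real) \<Rightarrow> nat \<Rightarrow> real \<Rightarrow> real \<Rightarrow> real \<Rightarrow> real \<Rightarrow> real \<Rightarrow> complex" where
  "radial_kernel q d b N nu phi t = (if -b < t then
     (1 / sqrt (t + b) * q (sqrt (t + b) / N) * (real d * sqrt (t + b) ^ (d - 1)))
       *\<^sub>R cis (-2*pi * sqrt (t + b) * phi - 2*pi*t*nu)
   else 0)"

lemma radial_kernel_eq_0:
  assumes supp: "\<forall>t. t \<notin> {1/2..2} \<longrightarrow> q t = 0" and N: "N > 0"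
    and t: "t \<notin> {N\<^sup>2/4 - b..4*N\<^sup>2 - b}"
  shows "radial_kernel q d b N nu phi t = 0"
proof (cases "-b < t")
  case True
  have "sqrt (t + b) / N \<notin> {1/2..2}"
  proof
    assume "sqrt (t + b) / N \<in> {1/2..2}"
    then have "N/2 \<le> sqrt (t + b)" and "sqrt (t + b) \<le> 2*N"
      using N by (auto simp: field_simps)
    then have "(N/2)\<^sup>2 \<le> (sqrt (t + b))\<^sup>2" and "(sqrt (t + b))\<^sup>2 \<le> (2*N)\<^sup>2"
      using N True by (intro power_mono; simp)+
    then show False
      using t True by (simp add: power_divide power_mult_distrib)
  qed
  then show ?thesis
    using supp by (simp add: radial_kernel_def)
qed (simp add: radial_kernel_def)

lemma continuous_on_radial_kernel:
  assumes q: "schwartz q" and N: "N > 0"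
  shows "continuous_on {N\<^sup>2/4 - b..4*N\<^sup>2 - b} (radial_kernel q d b N nu phi)"
proof -
  let ?S = "{N\<^sup>2/4 - b..4*N\<^sup>2 - b}"
  have pos: "0 < t + b" if "t \<in> ?S" for t
    using that N by (auto intro: less_le_trans[of 0 "N\<^sup>2/4"])
  have "continuous_on ?S (\<lambda>t. (1 / sqrt (t + b) * q (sqrt (t + b) / N) * (real d * sqrt (t + b) ^ (d - 1)))
     *\<^sub>R cis (-2*pi * sqrt (t + b) * phi - 2*pi*t*nu))"
    using pos N
    by (intro continuous_intros continuous_on_compose2[OF schwartz_continuous_on[OF q, of UNIV]])
      (auto simp: less_imp_neq[symmetric])
  then show ?thesis
    by (rule continuous_on_eq) (use pos in \<open>auto simp: radial_kernel_def\<close>)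
qed

lemma radial_kernel_split:
  assumes "-b < t"
  shows "radial_kernel q d b N nu phi t
    = (complex_of_real (1 / sqrt (t + b) * q (sqrt (t + b) / N)) * cis (-2*pi*t*nu))
      * ((real d * sqrt (t + b) ^ (d - 1)) *\<^sub>R cis (-2*pi*(sqrt (t + b) * phi)))"
proof -
  have "cis (-2*pi * sqrt (t + b) * phi - 2*pi*t*nu) = cis (-2*pi*(sqrt (t + b) * phi)) * cis (-2*pi*t*nu)"
    unfolding cis_mult by (rule arg_cong[where f = cis]) (simp add: algebra_simps)
  then show ?thesis
    using assms unfolding radial_kernel_def by (simp add: scaleR_conv_of_real mult_ac)
qed

lemma borel_measurable_radial_kernel:
  assumes "schwartz q" and [measurable]: "f \<in> borel_measurable M" "g \<in> borel_measurable M"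
  shows "(\<lambda>x. radial_kernel q d b N nu (f x) (g x)) \<in> borel_measurable M"
proof -
  have [measurable]: "q \<in> borel_measurable borel"
    using assms(1) by (intro borel_measurable_continuous_onI schwartz_continuous_on)
  show ?thesis
    unfolding radial_kernel_def by measurable
qed

lemma norm_radial_kernel_le:
  assumes q: "schwartz q" and supp: "\<forall>t. t \<notin> {1/2..2} \<longrightarrow> q t = 0"
    and d: "d \<ge> 1" and N: "N \<ge> 2"
  shows "norm (radial_kernel q d b N nu phi t)
    \<le> indicator {N\<^sup>2/4 - b..4*N\<^sup>2 - b} t * (deriv_sup q 0 * real d * (2*N) ^ (d - 1))"
proof (cases "t \<in> {N\<^sup>2/4 - b..4*N\<^sup>2 - b}")
  case False
  then show ?thesis
    using radial_kernel_eq_0[OF supp, of N t b d nu phi] N by simp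
next
  case True
  define s where "s = sqrt (t + b)"
  have tb: "N\<^sup>2/4 \<le> t + b" "t + b \<le> 4*N\<^sup>2"
    using True by auto
  have s: "N/2 \<le> s" "s \<le> 2*N"
    unfolding s_def using real_sqrt_le_mono[OF tb(1)] real_sqrt_le_mono[OF tb(2)] N
    by (simp_all add: real_sqrt_divide real_sqrt_mult)
  have t_gt: "-b < t"
    using tb N by (smt (verit) divide_pos_pos zero_less_power)
  have s_pos: "s > 0"
    using s N by simp
  then have "norm (radial_kernel q d b N nu phi t) = \<bar>q (s/N)\<bar> * real d * (s ^ (d - 1) / s)"
    unfolding radial_kernel_def s_def[symmetric] using s_pos t_gt by (simp add: norm_scaleR abs_mult)
  also have "\<dots> \<le> deriv_sup q 0 * real d * (2*N) ^ (d - 1)"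
  proof (intro mult_mono)
    show "\<bar>q (s/N)\<bar> \<le> deriv_sup q 0"
      using abs_deriv_le_deriv_sup[OF q, of 0] by simp
    have "s ^ (d - 1) / s \<le> s ^ (d - 1)"
      using s N by (simp add: divide_le_eq)
    also have "\<dots> \<le> (2*N) ^ (d - 1)"
      using s N by (intro power_mono) auto
    finally show "s ^ (d - 1) / s \<le> (2*N) ^ (d - 1)" .
  qed (use s N deriv_sup_nonneg[OF q] in auto)
  finally show ?thesis
    using True by simp
qed

text \<open>The substitution \<open>t = N\<^sup>2 (w - c)\<^sup>2 - b\<close> with \<open>phi = 2 N nu c\<close> completes the square in the
  phase, which becomes a constant minus \<open>2 pi N\<^sup>2 nu w\<^sup>2\<close>.\<close>

lemma radial_kernel_at_square:
  assumes N: "N > 0" and d: "d \<ge> 1" and phi: "phi = 2*N*nu*c" and u: "w - c > 0"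
  shows "(2*N\<^sup>2*(w - c)) *\<^sub>R radial_kernel q d b N nu phi (N\<^sup>2*(w - c)\<^sup>2 - b)
    = (complex_of_real (2*real d*N^d) * cis (2*pi*(N\<^sup>2*nu*c\<^sup>2 + b*nu)))
      * (amp_eval q c [(1, 0, 0, d - 1)] w *\<^sub>R cis (-2*pi*(N\<^sup>2*nu)*w\<^sup>2))"
proof -
  define u where "u = w - c"
  have u_pos: "u > 0"
    using u unfolding u_def by simp
  then have Nu: "N*u > 0"
    using N by simp
  have sq: "sqrt (N\<^sup>2*u\<^sup>2 - b + b) = N*u"
    using Nu by (simp add: power_mult_distrib[symmetric])
  have amp: "2*N\<^sup>2*u * (1/(N*u) * q u * (real d * (N*u) ^ (d - 1))) = 2*real d*N^d * (u ^ (d - 1) * q u)"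
  proof -
    obtain e where e: "d = Suc e"
      using d by (cases d) auto
    show ?thesis
      using u_pos N unfolding e by (simp add: field_simps power_mult_distrib power2_eq_square)
  qed
  have phase: "-2*pi * (N*u) * phi - 2*pi*(N\<^sup>2*u\<^sup>2 - b)*nu
      = 2*pi*(N\<^sup>2*nu*c\<^sup>2 + b*nu) + (-2*pi*(N\<^sup>2*nu)*w\<^sup>2)"
    unfolding phi u_def by (simp add: algebra_simps power2_eq_square)
  have "(2*N\<^sup>2*(w - c)) *\<^sub>R radial_kernel q d b N nu phi (N\<^sup>2*(w - c)\<^sup>2 - b)
      = (2*N\<^sup>2*u * (1/(N*u) * q u * (real d * (N*u) ^ (d - 1))))
          *\<^sub>R cis (-2*pi * (N*u) * phi - 2*pi*(N\<^sup>2*u\<^sup>2 - b)*nu)"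
    unfolding radial_kernel_def u_def[symmetric] using Nu N sq by simp
  also have "\<dots> = complex_of_real (2*real d*N^d * (u ^ (d - 1) * q u))
      * (cis (2*pi*(N\<^sup>2*nu*c\<^sup>2 + b*nu)) * cis (-2*pi*(N\<^sup>2*nu)*w\<^sup>2))"
    by (simp only: amp phase scaleR_conv_of_real cis_mult)
  finally show ?thesis
    by (simp add: amp_term_eval_def u_def scaleR_conv_of_real mult_ac)
qed

lemma integral_lborel_eq_integral_interval:
  fixes f :: "real \<Rightarrow> 'b::euclidean_space"
  assumes "continuous_on {a..b} f" and "\<And>t. t \<notin> {a..b} \<Longrightarrow> f t = 0"
  shows "(\<integral>t. f t \<partial>lborel) = integral {a..b} f"
proof -
  have "set_integrable lborel {a..b} f"
    unfolding set_integrable_def by (rule borel_integrable_compact) (use assms in auto)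
  moreover have "(\<integral>t. f t \<partial>lborel) = (\<integral>t. indicator {a..b} t *\<^sub>R f t \<partial>lborel)"
    using assms(2) by (intro Bochner_Integration.integral_cong) (auto simp: indicator_def)
  ultimately show ?thesis
    using set_borel_integral_eq_integral(2) unfolding set_lebesgue_integral_def by metis
qed

lemma integral_radial_kernel_eq_chirp:
  assumes q: "schwartz q" and supp: "\<forall>t. t \<notin> {1/2..2} \<longrightarrow> q t = 0"
    and d: "d \<ge> 1" and N: "N > 0" and phi: "phi = 2*N*nu*c" and c: "\<bar>c\<bar> \<le> 1/4"
  shows "(\<integral>t. radial_kernel q d b N nu phi t \<partial>lborel)
    = (complex_of_real (2*real d*N^d) * cis (2*pi*(N\<^sup>2*nu*c\<^sup>2 + b*nu)))
      * chirp_integral q c [(1, 0, 0, d - 1)] (N\<^sup>2*nu)"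
    (is "_ = ?K * _")
proof -
  let ?g = "radial_kernel q d b N nu phi"
  let ?s = "\<lambda>w. N\<^sup>2*(w - c)\<^sup>2 - b"
  have s_ends: "?s (c + 1/2) = N\<^sup>2/4 - b" "?s (c + 2) = 4*N\<^sup>2 - b"
    by (simp_all add: power2_eq_square)
  have s_image: "?s ` {c + 1/2..c + 2} \<subseteq> {N\<^sup>2/4 - b..4*N\<^sup>2 - b}"
  proof clarify
    fix w assume "w \<in> {c + 1/2..c + 2}"
    then have "(1/2)\<^sup>2 \<le> (w - c)\<^sup>2" "(w - c)\<^sup>2 \<le> 2\<^sup>2"
      by (intro power_mono; simp)+
    then have "N\<^sup>2 * (1/4) \<le> N\<^sup>2 * (w - c)\<^sup>2" "N\<^sup>2 * (w - c)\<^sup>2 \<le> N\<^sup>2 * 4"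
      by (intro mult_left_mono; simp add: power2_eq_square)+
    then show "?s w \<in> {N\<^sup>2/4 - b..4*N\<^sup>2 - b}"
      by auto
  qed
  have "(\<integral>t. ?g t \<partial>lborel) = integral {N\<^sup>2/4 - b..4*N\<^sup>2 - b} ?g"
    using continuous_on_radial_kernel[OF q N] radial_kernel_eq_0[OF supp N]
    by (rule integral_lborel_eq_integral_interval)
  also have "\<dots> = integral {c + 1/2..c + 2} (\<lambda>w. (2*N\<^sup>2*(w - c)) *\<^sub>R ?g (?s w))"
  proof -
    have "((\<lambda>w. (2*N\<^sup>2*(w - c)) *\<^sub>R ?g (?s w)) has_integral integral {?s (c + 1/2)..?s (c + 2)} ?g)
        {c + 1/2..c + 2}"
    proof (rule has_integral_substitution[OF _ _ _ continuous_on_radial_kernel[OF q N]])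
      show "(?s has_real_derivative 2*N\<^sup>2*(w - c)) (at w within {c + 1/2..c + 2})" for w
        by (auto intro!: derivative_eq_intros)
    qed (use N s_image in \<open>simp_all only: s_ends\<close>, simp_all)
    then show ?thesis
      unfolding s_ends by (rule integral_unique[symmetric])
  qed
  also have "\<dots> = integral {c + 1/2..c + 2} (\<lambda>w. ?K * (amp_eval q c [(1, 0, 0, d - 1)] w
      *\<^sub>R cis (-2*pi*(N\<^sup>2*nu)*w\<^sup>2)))"
    using radial_kernel_at_square[OF N d phi] by (intro integral_cong) auto
  also have "\<dots> = ?K * chirp_integral q c [(1, 0, 0, d - 1)] (N\<^sup>2*nu)"
    by (simp only: integral_mult_right chirp_integral_eq_integral_support[OF q supp c])
  finally show ?thesis .
qed

lemma norm_integral_radial_kernel_le: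
  assumes q: "schwartz q" and supp: "\<forall>t. t \<notin> {1/2..2} \<longrightarrow> q t = 0"
    and d: "d \<ge> 1" and N: "N \<ge> 2" and nu: "\<bar>nu\<bar> \<ge> 1" and phi: "\<bar>phi\<bar> \<le> 1"
  shows "norm (\<integral>t. radial_kernel q d b N nu phi t \<partial>lborel)
    \<le> 2*real d*N^d * (4 * amp_bound q ((amp_ibp ^^ k) [(1, 0, 0, d - 1)]) / \<bar>N\<^sup>2*nu\<bar> ^ k)"
proof -
  define c where "c = phi / (2*N*nu)"
  have phi_eq: "phi = 2*N*nu*c"
    using N nu unfolding c_def by auto
  have "4 \<le> 2*N*\<bar>nu\<bar>"
    using N nu mult_mono[of 2 N 1 "\<bar>nu\<bar>"] by simp
  then have c: "\<bar>c\<bar> \<le> 1/4"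
    using phi N unfolding c_def abs_divide abs_mult by (simp add: divide_le_eq)
  have "N\<^sup>2*nu \<noteq> 0"
    using N nu by auto
  have "norm (\<integral>t. radial_kernel q d b N nu phi t \<partial>lborel)
      = 2*real d*N^d * norm (chirp_integral q c [(1, 0, 0, d - 1)] (N\<^sup>2*nu))"
    using N by (simp add: integral_radial_kernel_eq_chirp[OF q supp d _ phi_eq c] norm_mult norm_power)
  also have "\<dots> \<le> 2*real d*N^d * (4 * amp_bound q ((amp_ibp ^^ k) [(1, 0, 0, d - 1)]) / \<bar>N\<^sup>2*nu\<bar> ^ k)"
    using N by (intro mult_left_mono norm_chirp_integral_decay[OF q supp c \<open>N\<^sup>2*nu \<noteq> 0\<close>]) auto
  finally show ?thesis .
qed

lemma nn_integral_lborel_unit_affine: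
  fixes g :: "'a::euclidean_space \<Rightarrow> ennreal"
  assumes g: "g \<in> borel_measurable borel" and c: "\<bar>c\<bar> = 1"
  shows "(\<integral>\<^sup>+x. g (t + c *\<^sub>R x) \<partial>lborel) = (\<integral>\<^sup>+x. g x \<partial>lborel)"
proof -
  have "(\<integral>\<^sup>+x. g x \<partial>lborel) = (\<integral>\<^sup>+x. g x \<partial>(density (distr lborel borel (\<lambda>x. t + c *\<^sub>R x)) (\<lambda>_. \<bar>c\<bar> ^ DIM('a))))"
    using lborel_affine[of c t] c by auto
  also have "\<dots> = (\<integral>\<^sup>+x. g (t + c *\<^sub>R x) \<partial>lborel)"
    using g c by (simp add: density_1 nn_integral_distr)
  finally show ?thesis ..
qed

lemma borel_measurable_cnj [measurable]:
  "f \<in> borel_measurable M \<Longrightarrow> (\<lambda>x. cnj (f x :: complex)) \<in> borel_measurable M"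
  by (erule borel_measurable_continuous_on[of cnj, rotated]) (intro continuous_intros)

lemma integrable_tilde:
  fixes f :: "'a::euclidean_space \<Rightarrow> complex"
  assumes f: "integrable lborel f"
  shows "integrable lborel (tilde f)"
proof -
  have [measurable]: "f \<in> borel_measurable borel"
    using f by simp
  have "(\<integral>\<^sup>+x. ennreal (norm (f (0 + (-1) *\<^sub>R x))) \<partial>lborel) = (\<integral>\<^sup>+x. ennreal (norm (f x)) \<partial>lborel)"
    by (rule nn_integral_lborel_unit_affine) auto
  then show ?thesis
    using f unfolding integrable_iff_bounded tilde_def by simp
qed

lemma borel_measurable_conv:
  fixes f g :: "'a::euclidean_space \<Rightarrow> complex"
  assumes [measurable]: "f \<in> borel_measurable borel" "g \<in> borel_measurable borel"
  shows "conv f g \<in> borel_measurable lborel"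
proof -
  have "(\<lambda>(x, y). f y * g (x - y)) \<in> borel_measurable (lborel \<Otimes>\<^sub>M lborel)"
    by measurable
  then show ?thesis
    unfolding conv_def[abs_def] by (rule lborel.borel_measurable_lebesgue_integral)
qed

lemma integrable_conv:
  fixes f g :: "'a::euclidean_space \<Rightarrow> complex"
  assumes f: "integrable lborel f" and g: "integrable lborel g"
  shows "integrable lborel (conv f g)"
proof (rule integrableI_bounded)
  have [measurable]: "f \<in> borel_measurable borel" "g \<in> borel_measurable borel"
    using f g by simp_all
  show "conv f g \<in> borel_measurable lborel"
    by (rule borel_measurable_conv) measurable
  have shift: "(\<integral>\<^sup>+x. ennreal (norm (g (x - y))) \<partial>lborel) = (\<integral>\<^sup>+x. ennreal (norm (g x)) \<partial>lborel)" for y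
    using nn_integral_lborel_unit_affine[of "\<lambda>x. ennreal (norm (g x))" 1 "- y"] by simp
  have "(\<integral>\<^sup>+x. ennreal (norm (conv f g x)) \<partial>lborel)
      \<le> (\<integral>\<^sup>+x. (\<integral>\<^sup>+y. ennreal (norm (f y * g (x - y))) \<partial>lborel) \<partial>lborel)"
  proof (rule nn_integral_mono)
    show "ennreal (norm (conv f g x)) \<le> (\<integral>\<^sup>+y. ennreal (norm (f y * g (x - y))) \<partial>lborel)" for x
      unfolding conv_def
      by (cases "integrable lborel (\<lambda>y. f y * g (x - y))")
        (simp_all add: integral_norm_bound_ennreal not_integrable_integral_eq)
  qed
  also have "\<dots> = (\<integral>\<^sup>+y. (\<integral>\<^sup>+x. ennreal (norm (f y)) * ennreal (norm (g (x - y))) \<partial>lborel) \<partial>lborel)"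
    by (subst lborel_pair.Fubini') (auto simp: norm_mult ennreal_mult)
  also have "\<dots> = (\<integral>\<^sup>+y. ennreal (norm (f y)) * (\<integral>\<^sup>+x. ennreal (norm (g x)) \<partial>lborel) \<partial>lborel)"
    by (simp add: nn_integral_cmult shift)
  also have "\<dots> = (\<integral>\<^sup>+x. ennreal (norm (f x)) \<partial>lborel) * (\<integral>\<^sup>+x. ennreal (norm (g x)) \<partial>lborel)"
    by (rule nn_integral_multc) measurable
  also have "\<dots> < \<infinity>"
    using f g unfolding integrable_iff_bounded by (simp add: ennreal_mult_less_top)
  finally show "(\<integral>\<^sup>+x. ennreal (norm (conv f g x)) \<partial>lborel) < \<infinity>" .
qed

lemma (in pair_sigma_finite) integrable_mult_fst_snd:
  fixes g h :: "_ \<Rightarrow> real"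
  assumes g: "integrable M1 g" and h: "integrable M2 h"
  shows "integrable (M1 \<Otimes>\<^sub>M M2) (\<lambda>p. g (fst p) * h (snd p))"
proof (rule Fubini_integrable)
  have [measurable]: "g \<in> borel_measurable M1" "h \<in> borel_measurable M2"
    using g h by auto
  show "(\<lambda>p. g (fst p) * h (snd p)) \<in> borel_measurable (M1 \<Otimes>\<^sub>M M2)"
    by measurable
  have "integrable M1 (\<lambda>x. \<bar>g x\<bar> * (\<integral>y. \<bar>h y\<bar> \<partial>M2))"
    using g by (intro integrable_mult_left) auto
  then show "integrable M1 (\<lambda>x. \<integral>y. norm (g (fst (x, y)) * h (snd (x, y))) \<partial>M2)"
    by (simp add: abs_mult)
  show "AE x in M1. integrable M2 (\<lambda>y. g (fst (x, y)) * h (snd (x, y)))"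
    using h by auto
qed

lemma sphere_ft_eq_integral_ball:
  fixes x :: "'a::euclidean_space"
  assumes "t \<ge> 0"
  shows "sphere_ft t x = (real DIM('a) * t ^ (DIM('a) - 1))
    *\<^sub>R (\<integral>\<eta>. indicator (cball 0 1 - {0}) \<eta> *\<^sub>R cis (-2*pi*(t * (x \<bullet> sgn \<eta>))) \<partial>lborel)"
proof -
  define c where "c = real DIM('a) * t ^ (DIM('a) - 1)"
  let ?B = "cball (0::'a) 1 - {0}"
  let ?M = "density lborel (\<lambda>\<eta>. ennreal (indicator ?B \<eta>))"
  have "c \<ge> 0"
    unfolding c_def using assms by simp
  have "sphere_ft t x
      = (\<integral>\<xi>. cis (-2*pi*(x \<bullet> \<xi>)) \<partial>(density (distr ?M borel (\<lambda>\<eta>. t *\<^sub>R sgn \<eta>)) (\<lambda>_. ennreal c)))"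
    unfolding sphere_ft_def sphere_measure_def c_def by (simp add: ennreal_indicator)
  also have "\<dots> = (\<integral>\<xi>. c *\<^sub>R cis (-2*pi*(x \<bullet> \<xi>)) \<partial>(distr ?M borel (\<lambda>\<eta>. t *\<^sub>R sgn \<eta>)))"
    by (rule integral_density) (use \<open>c \<ge> 0\<close> in auto)
  also have "\<dots> = (\<integral>\<eta>. c *\<^sub>R cis (-2*pi*(x \<bullet> (t *\<^sub>R sgn \<eta>))) \<partial>?M)"
    by (rule integral_distr) auto
  also have "\<dots> = (\<integral>\<eta>. indicator ?B \<eta> *\<^sub>R (c *\<^sub>R cis (-2*pi*(x \<bullet> (t *\<^sub>R sgn \<eta>)))) \<partial>lborel)"
    by (rule integral_density) (auto intro!: borel_measurable_indicator)
  also have "\<dots> = c *\<^sub>R (\<integral>\<eta>. indicator ?B \<eta> *\<^sub>R cis (-2*pi*(t * (x \<bullet> sgn \<eta>))) \<partial>lborel)"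
    by (subst integral_scaleR_right[symmetric]) (auto intro!: Bochner_Integration.integral_cong simp: mult_ac)
  finally show ?thesis
    unfolding c_def .
qed

text \<open>The pair \<open>(x, \<eta>)\<close> ranges over the unit ball of \<open>h1\<close> and the punctured unit ball from which
  \<open>sphere_measure\<close> is pushed forward by \<open>\<eta> \<mapsto> s sgn \<eta>\<close>.\<close>

definition polar_integrand ::
    "(real \<Rightarrow> real) \<Rightarrow> real \<Rightarrow> real \<Rightarrow> ('a::euclidean_space \<Rightarrow> complex) \<Rightarrow> real \<Rightarrow> real \<Rightarrow> 'a \<times> 'a \<Rightarrow> complex"
  where
  "polar_integrand q b N F nu t p =
     (indicator (cball 0 1) (fst p) * indicator (cball 0 1 - {0}) (snd p))
       *\<^sub>R (F (fst p) * radial_kernel q DIM('a) b N nu (fst p \<bullet> sgn (snd p)) t)"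

definition ball_weight :: "('a::euclidean_space \<Rightarrow> complex) \<Rightarrow> 'a \<times> 'a \<Rightarrow> real" where
  "ball_weight F p =
     indicator (cball 0 1) (fst p) * norm (F (fst p)) * indicator (cball 0 1 - {0}) (snd p)"

lemma integrable_indicator_punctured_ball:
  "integrable lborel (indicator (cball (0::'a::euclidean_space) 1 - {0}) :: 'a \<Rightarrow> real)"
proof -
  have "emeasure lborel (cball (0::'a) 1 - {0}) < \<infinity>"
    by (intro emeasure_bounded_finite) (auto intro: bounded_subset[OF bounded_cball])
  then show ?thesis
    by (intro integrable_indicator_iff[THEN iffD2]) auto
qed

lemma integrable_ball_weight:
  fixes F :: "'a::euclidean_space \<Rightarrow> complex"
  assumes "integrable lborel F"
  shows "integrable (lborel \<Otimes>\<^sub>M lborel) (ball_weight F)"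
proof -
  have "integrable lborel (\<lambda>x. indicator (cball (0::'a) 1) x *\<^sub>R norm (F x))"
    using assms by (intro integrable_mult_indicator) auto
  from lborel_pair.integrable_mult_fst_snd[OF this integrable_indicator_punctured_ball]
  show ?thesis
    unfolding ball_weight_def[abs_def] by simp
qed

lemma integral_ball_weight_le:
  fixes F :: "'a::euclidean_space \<Rightarrow> complex"
  assumes F: "integrable lborel F"
  shows "(\<integral>p. ball_weight F p \<partial>(lborel \<Otimes>\<^sub>M lborel)) \<le> measure lborel (cball (0::'a) 1 - {0}) * L1norm F"
proof -
  let ?B = "cball (0::'a) 1" and ?B' = "cball (0::'a) 1 - {0}"
  have "(\<integral>p. ball_weight F p \<partial>(lborel \<Otimes>\<^sub>M lborel))
      = measure lborel ?B' * (\<integral>x. indicator ?B x * norm (F x) \<partial>lborel)"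
    using lborel_pair.integral_fst'[OF integrable_ball_weight[OF F]]
    by (simp add: ball_weight_def[abs_def] mult.commute)
  also have "\<dots> \<le> measure lborel ?B' * L1norm F"
  proof (intro mult_left_mono)
    have "integrable lborel (\<lambda>x. indicator ?B x *\<^sub>R norm (F x))"
      using F by (intro integrable_mult_indicator) auto
    then show "(\<integral>x. indicator ?B x * norm (F x) \<partial>lborel) \<le> L1norm F"
      unfolding L1norm_def using F by (intro integral_mono) (auto simp: indicator_def)
  qed simp
  finally show ?thesis .
qed

lemma borel_measurable_polar_integrand:
  fixes F :: "'a::euclidean_space \<Rightarrow> complex"
  assumes q: "schwartz q" and [measurable]: "F \<in> borel_measurable borel"
  shows "(\<lambda>z. polar_integrand q b N F nu (fst z) (snd z))
    \<in> borel_measurable (lborel \<Otimes>\<^sub>M (lborel \<Otimes>\<^sub>M lborel :: ('a \<times> 'a) measure))"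
proof -
  have [measurable]: "(\<lambda>z. radial_kernel q DIM('a) b N nu (fst (snd z) \<bullet> sgn (snd (snd z))) (fst z))
      \<in> borel_measurable (lborel \<Otimes>\<^sub>M (lborel \<Otimes>\<^sub>M lborel :: ('a \<times> 'a) measure))"
    by (rule borel_measurable_radial_kernel[OF q]) measurable
  have [measurable]: "cball (0::'a) 1 \<in> sets borel" "cball (0::'a) 1 - {0} \<in> sets borel"
    by auto
  show ?thesis
    unfolding polar_integrand_def by measurable
qed

lemma norm_polar_integrand_le:
  fixes F :: "'a::euclidean_space \<Rightarrow> complex"
  assumes q: "schwartz q" and supp: "\<forall>t. t \<notin> {1/2..2} \<longrightarrow> q t = 0" and N: "N \<ge> 2"
  shows "norm (polar_integrand q b N F nu t p)
    \<le> indicator {N\<^sup>2/4 - b..4*N\<^sup>2 - b} t * (deriv_sup q 0 * real DIM('a) * (2*N) ^ (DIM('a) - 1))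
      * ball_weight F p"
proof -
  have "DIM('a) \<ge> 1"
    by (simp add: DIM_positive Suc_leI)
  from norm_radial_kernel_le[OF q supp this N]
  have "norm (F (fst p)) * norm (radial_kernel q DIM('a) b N nu (fst p \<bullet> sgn (snd p)) t)
      \<le> norm (F (fst p)) * (indicator {N\<^sup>2/4 - b..4*N\<^sup>2 - b} t
          * (deriv_sup q 0 * real DIM('a) * (2*N) ^ (DIM('a) - 1)))"
    by (rule mult_left_mono) simp
  then show ?thesis
    by (auto simp: polar_integrand_def ball_weight_def norm_mult indicator_def mult_ac)
qed

lemma integrable_polar_integrand:
  fixes F :: "'a::euclidean_space \<Rightarrow> complex"
  assumes q: "schwartz q" and supp: "\<forall>t. t \<notin> {1/2..2} \<longrightarrow> q t = 0"
    and F: "integrable lborel F" and N: "N \<ge> 2"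
  shows "integrable (lborel \<Otimes>\<^sub>M lborel) (polar_integrand q b N F nu t)"
proof (rule Bochner_Integration.integrable_bound)
  let ?M = "deriv_sup q 0 * real DIM('a) * (2*N) ^ (DIM('a) - 1)"
  have M: "?M \<ge> 0"
    using deriv_sup_nonneg[OF q] N by simp
  have F_meas: "F \<in> borel_measurable borel"
    using F by simp
  show "integrable (lborel \<Otimes>\<^sub>M lborel) (\<lambda>p. ?M * ball_weight F p)"
    using integrable_ball_weight[OF F] by (rule integrable_mult_right)
  have "(\<lambda>p. (t, p)) \<in> (lborel \<Otimes>\<^sub>M lborel) \<rightarrow>\<^sub>M (lborel \<Otimes>\<^sub>M (lborel \<Otimes>\<^sub>M lborel))"
    by measurable
  from measurable_compose[OF this borel_measurable_polar_integrand[OF q F_meas]]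
  show "polar_integrand q b N F nu t \<in> borel_measurable (lborel \<Otimes>\<^sub>M lborel)"
    by simp
  show "AE p in lborel \<Otimes>\<^sub>M lborel. norm (polar_integrand q b N F nu t p) \<le> norm (?M * ball_weight F p)"
    using M by (intro AE_I2 order_trans[OF norm_polar_integrand_le[OF q supp N]])
      (auto simp: indicator_def ball_weight_def)
qed

lemma integrable_polar_integrand_prod:
  fixes F :: "'a::euclidean_space \<Rightarrow> complex"
  assumes q: "schwartz q" and supp: "\<forall>t. t \<notin> {1/2..2} \<longrightarrow> q t = 0"
    and F: "integrable lborel F" and N: "N \<ge> 2"
  shows "integrable (lborel \<Otimes>\<^sub>M (lborel \<Otimes>\<^sub>M lborel))
    (\<lambda>z. polar_integrand q b N F nu (fst z) (snd z))"
proof (rule Bochner_Integration.integrable_bound)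
  let ?S = "{N\<^sup>2/4 - b..4*N\<^sup>2 - b}"
  let ?M = "deriv_sup q 0 * real DIM('a) * (2*N) ^ (DIM('a) - 1)"
  have M: "?M \<ge> 0"
    using deriv_sup_nonneg[OF q] N by simp
  interpret T: pair_sigma_finite "lborel :: real measure" "lborel \<Otimes>\<^sub>M lborel :: ('a \<times> 'a) measure"
    by (intro pair_sigma_finite.intro lborel.sigma_finite_measure_axioms sigma_finite_pair_measure)
  have "integrable lborel (\<lambda>t. indicator ?S t * ?M :: real)"
    by (intro integrable_mult_left integrable_indicator_iff[THEN iffD2]) auto
  from T.integrable_mult_fst_snd[OF this integrable_ball_weight[OF F]]
  show "integrable (lborel \<Otimes>\<^sub>M (lborel \<Otimes>\<^sub>M lborel)) (\<lambda>z. indicator ?S (fst z) * ?M * ball_weight F (snd z))" .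
  show "(\<lambda>z. polar_integrand q b N F nu (fst z) (snd z)) \<in> borel_measurable (lborel \<Otimes>\<^sub>M (lborel \<Otimes>\<^sub>M lborel))"
    using F by (intro borel_measurable_polar_integrand[OF q]) simp
  show "AE z in lborel \<Otimes>\<^sub>M (lborel \<Otimes>\<^sub>M lborel). norm (polar_integrand q b N F nu (fst z) (snd z))
      \<le> norm (indicator ?S (fst z) * ?M * ball_weight F (snd z))"
    using M by (intro AE_I2 order_trans[OF norm_polar_integrand_le[OF q supp N]]) (auto simp: ball_weight_def)
qed

lemma integral_polar_integrand_sphere:
  fixes F :: "'a::euclidean_space \<Rightarrow> complex"
  assumes t: "-b < t"
  shows "(\<integral>\<eta>. polar_integrand q b N F nu t (x, \<eta>) \<partial>lborel)
    = (complex_of_real (1 / sqrt (t + b) * q (sqrt (t + b) / N)) * cis (-2*pi*t*nu))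
      * (indicator (cball 0 1) x *\<^sub>R (F x * sphere_ft (sqrt (t + b)) x))"
    (is "_ = ?c * _")
proof -
  let ?d = "DIM('a)" and ?s = "sqrt (t + b)"
  have "0 \<le> ?s"
    using t by simp
  have "(\<integral>\<eta>. polar_integrand q b N F nu t (x, \<eta>) \<partial>lborel)
      = (\<integral>\<eta>. (?c * (indicator (cball 0 1) x *\<^sub>R F x)) * ((real ?d * ?s ^ (?d - 1))
          *\<^sub>R (indicator (cball 0 1 - {0}) \<eta> *\<^sub>R cis (-2*pi*(?s * (x \<bullet> sgn \<eta>))))) \<partial>lborel)"
    unfolding polar_integrand_def radial_kernel_split[OF t]
    by (intro Bochner_Integration.integral_cong) (auto simp: scaleR_conv_of_real mult_ac)
  also have "\<dots> = (?c * (indicator (cball 0 1) x *\<^sub>R F x)) * ((real ?d * ?s ^ (?d - 1))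
      *\<^sub>R (\<integral>\<eta>. indicator (cball 0 1 - {0}) \<eta> *\<^sub>R cis (-2*pi*(?s * (x \<bullet> sgn \<eta>))) \<partial>lborel))"
    by (simp only: integral_mult_right_zero integral_scaleR_right)
  also have "\<dots> = ?c * (indicator (cball 0 1) x *\<^sub>R (F x * sphere_ft ?s x))"
    unfolding sphere_ft_eq_integral_ball[OF \<open>0 \<le> ?s\<close>] by (simp add: scaleR_conv_of_real mult_ac)
  finally show ?thesis .
qed

lemma H1_cis_eq_integral_polar:
  fixes F :: "'a::euclidean_space \<Rightarrow> complex"
  assumes q: "schwartz q" and supp: "\<forall>t. t \<notin> {1/2..2} \<longrightarrow> q t = 0"
    and F: "integrable lborel F" and N: "N \<ge> 2"
  shows "H1 q b F N t * cis (-2*pi*t*nu) = (\<integral>p. polar_integrand q b N F nu t p \<partial>(lborel \<Otimes>\<^sub>M lborel))"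
proof (cases "-b < t")
  case False
  then show ?thesis
    by (simp add: H1_def polar_integrand_def radial_kernel_def)
next
  case True
  have "(\<integral>p. polar_integrand q b N F nu t p \<partial>(lborel \<Otimes>\<^sub>M lborel))
      = (\<integral>x. (\<integral>\<eta>. polar_integrand q b N F nu t (x, \<eta>) \<partial>lborel) \<partial>lborel)"
    using lborel_pair.integral_fst'[OF integrable_polar_integrand[OF q supp F N]] by simp
  also have "\<dots> = (complex_of_real (1 / sqrt (t + b) * q (sqrt (t + b) / N)) * cis (-2*pi*t*nu))
      * h1 F (sqrt (t + b))"
    unfolding integral_polar_integrand_sphere[OF True] h1_def by (rule integral_mult_right_zero)
  also have "\<dots> = H1 q b F N t * cis (-2*pi*t*nu)"
    using True unfolding H1_def by (simp add: mult_ac)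
  finally show ?thesis ..
qed

lemma ft1_H1_eq_integral_polar:
  fixes F :: "'a::euclidean_space \<Rightarrow> complex"
  assumes q: "schwartz q" and supp: "\<forall>t. t \<notin> {1/2..2} \<longrightarrow> q t = 0"
    and F: "integrable lborel F" and N: "N \<ge> 2"
  shows "integrable (lborel \<Otimes>\<^sub>M lborel) (\<lambda>p. \<integral>t. polar_integrand q b N F nu t p \<partial>lborel)"
    and "ft1 (H1 q b F N) nu
      = (\<integral>p. (\<integral>t. polar_integrand q b N F nu t p \<partial>lborel) \<partial>(lborel \<Otimes>\<^sub>M lborel))"
proof -
  interpret T: pair_sigma_finite "lborel :: real measure" "lborel \<Otimes>\<^sub>M lborel :: ('a \<times> 'a) measure"
    by (intro pair_sigma_finite.intro lborel.sigma_finite_measure_axioms sigma_finite_pair_measure)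
  have int: "integrable (lborel \<Otimes>\<^sub>M (lborel \<Otimes>\<^sub>M lborel)) (case_prod (polar_integrand q b N F nu))"
    using integrable_polar_integrand_prod[OF q supp F N] by (simp add: case_prod_beta')
  show "integrable (lborel \<Otimes>\<^sub>M lborel) (\<lambda>p. \<integral>t. polar_integrand q b N F nu t p \<partial>lborel)"
    using T.integrable_snd[OF int] .
  have "ft1 (H1 q b F N) nu = (\<integral>t. (\<integral>p. polar_integrand q b N F nu t p \<partial>(lborel \<Otimes>\<^sub>M lborel)) \<partial>lborel)"
    unfolding ft1_def using H1_cis_eq_integral_polar[OF q supp F N] by simp
  also have "\<dots> = (\<integral>p. (\<integral>t. polar_integrand q b N F nu t p \<partial>lborel) \<partial>(lborel \<Otimes>\<^sub>M lborel))"
    using T.Fubini_integral[OF int] by simp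
  finally show "ft1 (H1 q b F N) nu
      = (\<integral>p. (\<integral>t. polar_integrand q b N F nu t p \<partial>lborel) \<partial>(lborel \<Otimes>\<^sub>M lborel))" .
qed

lemma norm_integral_polar_integrand_le:
  fixes F :: "'a::euclidean_space \<Rightarrow> complex"
  assumes q: "schwartz q" and supp: "\<forall>t. t \<notin> {1/2..2} \<longrightarrow> q t = 0"
    and N: "N \<ge> 2" and nu: "\<bar>nu\<bar> \<ge> 1"
  shows "norm (\<integral>t. polar_integrand q b N F nu t p \<partial>lborel)
    \<le> 2*real DIM('a)*N^DIM('a) * (4 * amp_bound q ((amp_ibp ^^ DIM('a)) [(1, 0, 0, DIM('a) - 1)])
        / \<bar>N\<^sup>2*nu\<bar> ^ DIM('a)) * ball_weight F p"
    (is "_ \<le> ?M * _")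
proof -
  obtain x \<eta> :: 'a where p: "p = (x, \<eta>)"
    by force
  have eq: "(\<integral>t. polar_integrand q b N F nu t p \<partial>lborel)
      = (indicator (cball 0 1) x * indicator (cball 0 1 - {0}) \<eta>)
        *\<^sub>R (F x * (\<integral>t. radial_kernel q DIM('a) b N nu (x \<bullet> sgn \<eta>) t \<partial>lborel))"
    unfolding polar_integrand_def p by (simp only: integral_scaleR_right integral_mult_right_zero fst_conv snd_conv)
  show ?thesis
  proof (cases "x \<in> cball 0 1 \<and> \<eta> \<in> cball 0 1 - {0}")
    case True
    have "\<bar>x \<bullet> sgn \<eta>\<bar> \<le> norm x * norm (sgn \<eta>)"
      by (rule Cauchy_Schwarz_ineq2)
    also have "\<dots> \<le> 1"
      using True by (simp add: norm_sgn)
    finally have "norm (\<integral>t. radial_kernel q DIM('a) b N nu (x \<bullet> sgn \<eta>) t \<partial>lborel) \<le> ?M"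
      using DIM_positive by (intro norm_integral_radial_kernel_le[OF q supp _ N nu]) (simp add: Suc_leI)
    then have "norm (F x) * norm (\<integral>t. radial_kernel q DIM('a) b N nu (x \<bullet> sgn \<eta>) t \<partial>lborel)
        \<le> norm (F x) * ?M"
      by (rule mult_left_mono) simp
    then show ?thesis
      unfolding eq using True by (simp add: ball_weight_def p norm_mult mult_ac)
  next
    case False
    then show ?thesis
      unfolding eq by (auto simp: ball_weight_def p)
  qed
qed

lemma norm_ft1_H1_le:
  fixes F :: "'a::euclidean_space \<Rightarrow> complex"
  assumes q: "schwartz q" and supp: "\<forall>t. t \<notin> {1/2..2} \<longrightarrow> q t = 0"
    and F: "integrable lborel F" and N: "N \<ge> 2" and nu: "\<bar>nu\<bar> \<ge> 1"
  shows "norm (ft1 (H1 q b F N) nu)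
    \<le> 2*real DIM('a)*N^DIM('a) * (4 * amp_bound q ((amp_ibp ^^ DIM('a)) [(1, 0, 0, DIM('a) - 1)])
        / \<bar>N\<^sup>2*nu\<bar> ^ DIM('a)) * measure lborel (cball (0::'a) 1 - {0}) * L1norm F"
    (is "_ \<le> ?M * _ * _")
proof -
  have M: "?M \<ge> 0"
    using amp_bound_nonneg[OF q supp] N by simp
  have "norm (ft1 (H1 q b F N) nu)
      \<le> (\<integral>p. norm (\<integral>t. polar_integrand q b N F nu t p \<partial>lborel) \<partial>(lborel \<Otimes>\<^sub>M lborel))"
    unfolding ft1_H1_eq_integral_polar(2)[OF q supp F N] by (rule integral_norm_bound)
  also have "\<dots> \<le> (\<integral>p. ?M * ball_weight F p \<partial>(lborel \<Otimes>\<^sub>M lborel))"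
    using ft1_H1_eq_integral_polar(1)[OF q supp F N] integrable_ball_weight[OF F]
    by (intro integral_mono norm_integral_polar_integrand_le[OF q supp N nu]) auto
  also have "\<dots> = ?M * (\<integral>p. ball_weight F p \<partial>(lborel \<Otimes>\<^sub>M lborel))"
    by (rule integral_mult_right_zero)
  also have "\<dots> \<le> ?M * (measure lborel (cball (0::'a) 1 - {0}) * L1norm F)"
    by (rule mult_left_mono[OF integral_ball_weight_le[OF F] M])
  finally show ?thesis
    by (simp add: mult.assoc)
qed

lemma has_sum_inverse_squares_int:
  "((\<lambda>\<nu>::int. 1 / (real_of_int \<nu>)\<^sup>2) has_sum (pi\<^sup>2/3)) (UNIV - {0})"
proof -
  let ?g = "\<lambda>\<nu>::int. 1 / (real_of_int \<nu>)\<^sup>2"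
  define pos where "pos = (\<lambda>n::nat. int n + 1)"
  define neg where "neg = (\<lambda>n::nat. - (int n + 1))"
  have base: "((\<lambda>n::nat. 1 / (real n + 1)\<^sup>2) has_sum (pi\<^sup>2/6)) UNIV"
    using sums_nonneg_imp_has_sum[OF inverse_squares_sums] by (simp add: add.commute)
  have "(?g has_sum (pi\<^sup>2/6)) (range pos)"
    using base by (subst has_sum_reindex) (auto simp: inj_on_def pos_def o_def)
  moreover have "(?g has_sum (pi\<^sup>2/6)) (range neg)"
  proof -
    have "(\<lambda>n::nat. 1 / (- real n - 1)\<^sup>2) = (\<lambda>n. 1 / (real n + 1)\<^sup>2)"
      by (auto simp: power2_eq_square algebra_simps)
    then show ?thesis
      using base by (subst has_sum_reindex) (auto simp: inj_on_def neg_def o_def)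
  qed
  ultimately have "(?g has_sum (pi\<^sup>2/6 + pi\<^sup>2/6)) (range pos \<union> range neg)"
    by (rule has_sum_Un_disjoint) (auto simp: pos_def neg_def)
  moreover have "UNIV - {0} = range pos \<union> range neg"
  proof (intro set_eqI iffI)
    fix x :: int
    assume "x \<in> UNIV - {0}"
    then have "x = pos (nat (x - 1)) \<or> x = neg (nat (- x - 1))"
      unfolding pos_def neg_def by auto
    then show "x \<in> range pos \<union> range neg"
      by blast
  qed (auto simp: pos_def neg_def)
  ultimately show ?thesis
    by simp
qed

lemma summable_on_nonzero_int_inverse_square_bound:
  fixes a :: "int \<Rightarrow> 'b::real_normed_vector"
  assumes bound: "\<And>\<nu>. \<nu> \<noteq> 0 \<Longrightarrow> norm (a \<nu>) \<le> A / (real_of_int \<nu>)\<^sup>2"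
  shows "(\<lambda>\<nu>. norm (a \<nu>)) summable_on (UNIV - {0})"
    and "(\<Sum>\<^sub>\<infinity>\<nu>\<in>UNIV - {0}. norm (a \<nu>)) \<le> pi\<^sup>2/3 * A"
proof -
  have major: "((\<lambda>\<nu>. A * (1 / (real_of_int \<nu>)\<^sup>2)) has_sum (A * (pi\<^sup>2/3))) (UNIV - {0})"
    by (rule has_sum_cmult_right[OF has_sum_inverse_squares_int])
  have bound': "norm (a \<nu>) \<le> A * (1 / (real_of_int \<nu>)\<^sup>2)" if "\<nu> \<in> UNIV - {0}" for \<nu>
    using bound[of \<nu>] that by simp
  show summable: "(\<lambda>\<nu>. norm (a \<nu>)) summable_on (UNIV - {0})"
    by (rule summable_on_comparison_test[OF has_sum_imp_summable[OF major] bound']) simp_all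
  have "(\<Sum>\<^sub>\<infinity>\<nu>\<in>UNIV - {0}. norm (a \<nu>)) \<le> (\<Sum>\<^sub>\<infinity>\<nu>\<in>UNIV - {0}. A * (1 / (real_of_int \<nu>)\<^sup>2))"
    using bound' by (intro infsum_mono[OF summable has_sum_imp_summable[OF major]]) auto
  also have "\<dots> = pi\<^sup>2/3 * A"
    using infsumI[OF major] by simp
  finally show "(\<Sum>\<^sub>\<infinity>\<nu>\<in>UNIV - {0}. norm (a \<nu>)) \<le> pi\<^sup>2/3 * A" .
qed

lemma norm_ft1_H1_le_inverse_square:
  fixes q :: "real \<Rightarrow> real"
  assumes d: "DIM('a::euclidean_space) \<ge> 2"
    and q: "schwartz q" and supp: "\<forall>t. t \<notin> {1/2..2} \<longrightarrow> q t = 0"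
  obtains K where "K \<ge> 0"
    and "\<And>b (F :: 'a \<Rightarrow> complex) N \<nu>. integrable lborel F \<Longrightarrow> N \<ge> 2 \<Longrightarrow> \<nu> \<noteq> 0 \<Longrightarrow>
      norm (ft1 (H1 q b F N) (of_int \<nu>)) \<le> K * L1norm F / N / (real_of_int \<nu>)\<^sup>2"
proof
  let ?d = "DIM('a)"
  define K where "K = 8 * real ?d * amp_bound q ((amp_ibp ^^ ?d) [(1, 0, 0, ?d - 1)])
    * measure lborel (cball (0::'a) 1 - {0})"
  show K: "K \<ge> 0"
    unfolding K_def using amp_bound_nonneg[OF q supp] by simp
  fix b N :: real and F :: "'a \<Rightarrow> complex" and \<nu> :: int
  assume F: "integrable lborel F" and N: "N \<ge> 2" and \<nu>: "\<nu> \<noteq> 0"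
  have \<nu>1: "\<bar>real_of_int \<nu>\<bar> \<ge> 1"
    using \<nu> by linarith
  have L: "L1norm F \<ge> 0"
    unfolding L1norm_def by simp
  have "norm (ft1 (H1 q b F N) (of_int \<nu>)) \<le> K * L1norm F / (N ^ ?d * \<bar>real_of_int \<nu>\<bar> ^ ?d)"
    using norm_ft1_H1_le[OF q supp F N \<nu>1, of b] N unfolding K_def
    by (simp add: power_mult_distrib abs_mult power2_eq_square power_mult[symmetric] field_simps)
  also have "\<dots> \<le> K * L1norm F / (N * (real_of_int \<nu>)\<^sup>2)"
  proof (rule divide_left_mono)
    have "N \<le> N ^ ?d"
      using N d by (intro self_le_power) auto
    moreover have "(real_of_int \<nu>)\<^sup>2 \<le> \<bar>real_of_int \<nu>\<bar> ^ ?d"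
      using \<nu>1 d by (metis power2_abs power_increasing)
    ultimately show "N * (real_of_int \<nu>)\<^sup>2 \<le> N ^ ?d * \<bar>real_of_int \<nu>\<bar> ^ ?d"
      using N by (intro mult_mono) auto
  qed (use K L N \<nu> in auto)
  finally show "norm (ft1 (H1 q b F N) (of_int \<nu>)) \<le> K * L1norm F / N / (real_of_int \<nu>)\<^sup>2"
    by simp
qed

theorem lemma1:
  fixes q :: "real \<Rightarrow> real"
  assumes "DIM('a::euclidean_space) \<ge> 2"
    and "schwartz q"
    and "\<forall>t. t \<notin> {1/2..2} \<longrightarrow> q t = 0"
  shows "\<exists>C N0. C > 0 \<and>
           (\<forall>b f N. b \<in> {0..<1} \<longrightarrow> integrable lborel (f :: 'a \<Rightarrow> complex) \<longrightarrow> N \<ge> N0 \<longrightarrow>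
              (let F = conv f (tilde f); H = H1 q b F N in
                 (\<lambda>\<nu>::int. norm (ft1 H (of_int \<nu>))) summable_on (UNIV - {0}) \<and>
                 (\<Sum>\<^sub>\<infinity>\<nu>\<in>UNIV - {0}. norm (ft1 H (of_int \<nu>))) \<le> C * L1norm F / N))"
proof -
  obtain K where K: "K \<ge> 0" and decay: "\<And>b (F :: 'a \<Rightarrow> complex) N \<nu>.
      integrable lborel F \<Longrightarrow> N \<ge> 2 \<Longrightarrow> \<nu> \<noteq> 0 \<Longrightarrow>
      norm (ft1 (H1 q b F N) (of_int \<nu>)) \<le> K * L1norm F / N / (real_of_int \<nu>)\<^sup>2"
    using norm_ft1_H1_le_inverse_square[OF assms] by blast
  define C where "C = pi\<^sup>2/3 * K + 1"
  have "C > 0"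
    unfolding C_def using K by (simp add: add_nonneg_pos)
  moreover have "(\<lambda>\<nu>::int. norm (ft1 (H1 q b (conv f (tilde f)) N) (of_int \<nu>))) summable_on (UNIV - {0}) \<and>
      (\<Sum>\<^sub>\<infinity>\<nu>\<in>UNIV - {0}. norm (ft1 (H1 q b (conv f (tilde f)) N) (of_int \<nu>)))
        \<le> C * L1norm (conv f (tilde f)) / N"
    if f: "integrable lborel f" and N: "N \<ge> 2" for b N :: real and f :: "'a \<Rightarrow> complex"
  proof -
    (* The estimates hold for every real b. *)
    have F: "integrable lborel (conv f (tilde f))"
      using f by (simp add: integrable_conv integrable_tilde)
    note sum = summable_on_nonzero_int_inverse_square_bound[OF decay[where b = b, OF F N]]
    have "pi\<^sup>2/3 * (K * L1norm (conv f (tilde f)) / N) \<le> C * L1norm (conv f (tilde f)) / N"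
      using N unfolding L1norm_def C_def by (simp add: field_simps)
    then show ?thesis
      using sum by auto
  qed
  ultimately show ?thesis
    unfolding Let_def by blast
qed

end
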